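(* Under the hypotheses of Lemma 1 (real random variable $\hat g_i$ with mean $g_i\ne0$, variance $\sigma_i^2>0$, unimodal and symmetric distribution about $g_i$), one has $$\mathrm{Prob}(\mathrm{sign}\,\hat g_i=\mathrm{sign}\,g_i)\ge1-\frac12\cdot\frac{1}{1+z+z^2},\qquad z:=\frac{|g_i|}{\sqrt3\sigma_i}.$$
   Context: $\mathrm{sign}\,t=1,0,-1$ for $t>0,t=0,t<0$. *)

theory Defs
  imports "HOL-Probability.Probability"
begin

definition cdf_of :: "'a measure \<Rightarrow> ('a \<Rightarrow> real) \<Rightarrow> real \<Rightarrow> real" where
  "cdf_of M X x = measure M {\<omega> \<in> space M. X \<omega> \<le> x}"

text \<open>Unimodal (Khintchine): there is a mode m such that the distribution function is
  convex on the left of m and concave on the right of m.\<close>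
definition unimodal :: "'a measure \<Rightarrow> ('a \<Rightarrow> real) \<Rightarrow> bool" where
  "unimodal M X \<longleftrightarrow> (\<exists>m. convex_on {..<m} (cdf_of M X) \<and> concave_on {m<..} (cdf_of M X))"

definition symmetric_about :: "'a measure \<Rightarrow> ('a \<Rightarrow> real) \<Rightarrow> real \<Rightarrow> bool" where
  "symmetric_about M X c \<longleftrightarrow>
     distr M borel (\<lambda>\<omega>. X \<omega> - c) = distr M borel (\<lambda>\<omega>. c - X \<omega>)"

end

theory Submission
  imports Defs
begin

text \<open>Write Y = X - g and q = P(Y \<ge> |g|), the probability of a wrong sign. By unimodality and
  symmetry the tail T(t) = P(Y \<ge> t) is convex on (0, \<infinity>) and at most 1/2 there. Hence T \<ge> q
  on [0, |g|], and beyond |g| the graph of T lies above the line through (0, 1/2) and (|g|, q).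
  Integrating 2t T(t), which gives E[max(Y,0)^2] = \<sigma>^2/2, against this trapezoid yields
  g^2 (1 - v^3) \<le> 3 \<sigma>^2 v^2 for v = 1 - 2q, and solving for q gives the bound.\<close>

lemma has_integral_of_real_deriv:
  fixes F f :: "real \<Rightarrow> real"
  assumes "a \<le> b" and "\<And>x. (F has_real_derivative f x) (at x)"
  shows "(f has_integral (F b - F a)) {a..b}"
  by (rule fundamental_theorem_of_calculus[OF assms(1)])
    (use assms(2) in \<open>simp add: has_real_derivative_iff_has_vector_derivative[symmetric]
                                  has_field_derivative_at_within\<close>)

lemma convex_on_compose_affine:
  fixes f :: "real \<Rightarrow> real"
  assumes f: "convex_on S f" and T: "convex T" "\<And>t. t \<in> T \<Longrightarrow> a + b * t \<in> S"
  shows "convex_on T (\<lambda>t. f (a + b * t))"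
  unfolding convex_on_def
proof (intro conjI T ballI allI impI)
  fix x y u v :: real
  assume xy: "x \<in> T" "y \<in> T" and uv: "0 \<le> u" "0 \<le> v" "u + v = 1"
  have "a + b * (u *\<^sub>R x + v *\<^sub>R y) = u *\<^sub>R (a + b * x) + v *\<^sub>R (a + b * y)"
  proof -
    have "a * u + a * v = a" using uv(3) by (metis distrib_left mult.right_neutral)
    then show ?thesis by (simp add: algebra_simps)
  qed
  then show "f (a + b * (u *\<^sub>R x + v *\<^sub>R y)) \<le> u * f (a + b * x) + v * f (a + b * y)"
    using f xy uv T(2) unfolding convex_on_def by auto
qed

lemma concave_on_compose_affine:
  fixes f :: "real \<Rightarrow> real"
  assumes "concave_on S f" "convex T" "\<And>t. t \<in> T \<Longrightarrow> a + b * t \<in> S"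
  shows "concave_on T (\<lambda>t. f (a + b * t))"
  using assms convex_on_compose_affine[of S "\<lambda>x. - f x"] by (simp add: concave_on_def)

lemma convex_on_cong:
  assumes "convex_on S f" "\<And>x. x \<in> S \<Longrightarrow> f x = g x"
  shows "convex_on S g"
  using assms convex_on_imp_convex[OF assms(1)] unfolding convex_on_def
  by (simp add: convexD)

lemma convex_on_ge_line_through_bound:
  fixes \<phi> :: "real \<Rightarrow> real"
  assumes cvx: "convex_on {0<..} \<phi>" and bound: "\<And>t. 0 < t \<Longrightarrow> \<phi> t \<le> B"
    and "0 < k" "k \<le> t"
  shows "B - (B - \<phi> k) * t / k \<le> \<phi> t"
proof (cases "k = t")
  case False
  with assms have kt: "0 < k" "k < t" by auto
  have slope: "(\<phi> k - B) / (k - e) \<le> (\<phi> t - \<phi> k) / (t - k)" if e: "0 < e" "e < k" for e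
  proof -
    have "(\<phi> k - B) / (k - e) \<le> (\<phi> k - \<phi> e) / (k - e)"
      using bound[of e] e by (intro divide_right_mono) auto
    also have "\<dots> = (\<phi> e - \<phi> k) / (e - k)"
      by (metis minus_diff_eq minus_divide_divide)
    also have "\<dots> \<le> (\<phi> e - \<phi> t) / (e - t)"
      using convex_on_slope_le(1)[OF cvx, of e t k] e kt by simp
    also have "\<dots> \<le> (\<phi> k - \<phi> t) / (k - t)"
      using convex_on_slope_le(2)[OF cvx, of e t k] e kt by simp
    also have "\<dots> = (\<phi> t - \<phi> k) / (t - k)"
      by (metis minus_diff_eq minus_divide_divide)
    finally show ?thesis .
  qed
  have "(\<phi> k - B) / (k - 0) \<le> (\<phi> t - \<phi> k) / (t - k)"
  proof (rule tendsto_upperbound[where f = "\<lambda>e. (\<phi> k - B) / (k - e)" and F = "at_right 0"])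
    show "((\<lambda>e. (\<phi> k - B) / (k - e)) \<longlongrightarrow> (\<phi> k - B) / (k - 0)) (at_right 0)"
      using kt by (intro tendsto_intros) auto
    show "\<forall>\<^sub>F e in at_right 0. (\<phi> k - B) / (k - e) \<le> (\<phi> t - \<phi> k) / (t - k)"
      using eventually_at_right_real[OF kt(1)] by eventually_elim (use slope in auto)
  qed simp
  then show ?thesis
    using kt by (simp add: field_simps)
qed (use assms in auto)

lemma symmetric_about_measure_eq:
  assumes sym: "symmetric_about M X c" and [measurable]: "X \<in> borel_measurable M"
    and A: "A \<in> sets borel"
  shows "measure M {\<omega> \<in> space M. X \<omega> - c \<in> A} = measure M {\<omega> \<in> space M. c - X \<omega> \<in> A}"
proof -
  have "measure M {\<omega> \<in> space M. X \<omega> - c \<in> A} = measure (distr M borel (\<lambda>\<omega>. X \<omega> - c)) A"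
    using A by (subst measure_distr) (auto simp: vimage_def Int_def conj_commute)
  also have "\<dots> = measure (distr M borel (\<lambda>\<omega>. c - X \<omega>)) A"
    using sym by (simp add: symmetric_about_def)
  also have "\<dots> = measure M {\<omega> \<in> space M. c - X \<omega> \<in> A}"
    using A by (subst measure_distr) (auto simp: vimage_def Int_def conj_commute)
  finally show ?thesis .
qed

lemma symmetric_about_integral_eq:
  fixes f :: "real \<Rightarrow> real"
  assumes sym: "symmetric_about M X c" and [measurable]: "X \<in> borel_measurable M"
    and [measurable]: "f \<in> borel_measurable borel"
  shows "(\<integral>\<omega>. f (X \<omega> - c) \<partial>M) = (\<integral>\<omega>. f (c - X \<omega>) \<partial>M)"
proof -
  have "(\<integral>\<omega>. f (X \<omega> - c) \<partial>M) = integral\<^sup>L (distr M borel (\<lambda>\<omega>. X \<omega> - c)) f"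
    by (subst integral_distr) auto
  also have "\<dots> = integral\<^sup>L (distr M borel (\<lambda>\<omega>. c - X \<omega>)) f"
    using sym by (simp add: symmetric_about_def)
  also have "\<dots> = (\<integral>\<omega>. f (c - X \<omega>) \<partial>M)"
    by (subst integral_distr) auto
  finally show ?thesis .
qed

lemma symmetric_about_upper_tail_le_half:
  assumes "prob_space M" "symmetric_about M X c" and [measurable]: "X \<in> borel_measurable M"
    and "0 < t"
  shows "measure M {\<omega> \<in> space M. t \<le> X \<omega> - c} \<le> 1 / 2"
proof -
  interpret prob_space M by fact
  let ?P = "\<lambda>A. measure M {\<omega> \<in> space M. X \<omega> - c \<in> A}"
  have "measure M {\<omega> \<in> space M. t \<le> X \<omega> - c} \<le> ?P {0<..}"
    using \<open>0 < t\<close> by (intro finite_measure_mono) auto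
  moreover have "?P {0<..} = measure M {\<omega> \<in> space M. c - X \<omega> \<in> {0<..}}"
    using assms by (intro symmetric_about_measure_eq) auto
  moreover have "measure M {\<omega> \<in> space M. c - X \<omega> \<in> {0<..}} \<le> 1 - ?P {0<..}"
  proof -
    have "measure M {\<omega> \<in> space M. c - X \<omega> \<in> {0<..}}
        \<le> measure M (space M - {\<omega> \<in> space M. X \<omega> - c \<in> {0<..}})"
      by (intro finite_measure_mono) auto
    also have "\<dots> = 1 - ?P {0<..}"
      by (rule prob_compl) measurable
    finally show ?thesis .
  qed
  ultimately show ?thesis by linarith
qed

lemma symmetric_about_pos_part_second_moment:
  assumes sym: "symmetric_about M X c" and [measurable]: "X \<in> borel_measurable M"
    and int: "integrable M (\<lambda>\<omega>. (X \<omega> - c)\<^sup>2)"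
  shows "(\<integral>\<^sup>+\<omega>. ennreal ((max (X \<omega> - c) 0)\<^sup>2) \<partial>M) = ennreal ((\<integral>\<omega>. (X \<omega> - c)\<^sup>2 \<partial>M) / 2)"
proof -
  have int_pos: "integrable M (\<lambda>\<omega>. (max (X \<omega> - c) 0)\<^sup>2)"
    by (rule Bochner_Integration.integrable_bound[OF int]) (auto simp: max_def)
  have int_neg: "integrable M (\<lambda>\<omega>. (max (c - X \<omega>) 0)\<^sup>2)"
    by (rule Bochner_Integration.integrable_bound[OF int]) (auto simp: max_def power2_commute)
  have "(\<integral>\<omega>. (X \<omega> - c)\<^sup>2 \<partial>M) = (\<integral>\<omega>. (max (X \<omega> - c) 0)\<^sup>2 + (max (c - X \<omega>) 0)\<^sup>2 \<partial>M)"
    by (intro Bochner_Integration.integral_cong) (auto simp: max_def power2_commute)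
  also have "\<dots> = (\<integral>\<omega>. (max (X \<omega> - c) 0)\<^sup>2 \<partial>M) + (\<integral>\<omega>. (max (c - X \<omega>) 0)\<^sup>2 \<partial>M)"
    using int_pos int_neg by simp
  also have "(\<integral>\<omega>. (max (c - X \<omega>) 0)\<^sup>2 \<partial>M) = (\<integral>\<omega>. (max (X \<omega> - c) 0)\<^sup>2 \<partial>M)"
    using symmetric_about_integral_eq[OF sym, of "\<lambda>y. (max y 0)\<^sup>2"] by simp
  finally show ?thesis
    using int_pos by (simp add: nn_integral_eq_integral)
qed

lemma convex_on_upper_tail:
  assumes P: "prob_space M" and [measurable]: "X \<in> borel_measurable M"
    and uni: "unimodal M X" and sym: "symmetric_about M X g"
  shows "convex_on {0<..} (\<lambda>t. measure M {\<omega> \<in> space M. t \<le> X \<omega> - g})"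
proof -
  interpret prob_space M by (rule P)
  let ?T = "\<lambda>t. measure M {\<omega> \<in> space M. t \<le> X \<omega> - g}"
  obtain m where cvx: "convex_on {..<m} (cdf_of M X)" and ccv: "concave_on {m<..} (cdf_of M X)"
    using uni by (auto simp: unimodal_def)
  show ?thesis
  proof (cases "g \<le> m")
    case True
    have "?T t = cdf_of M X (g + (-1) * t)" for t
      using symmetric_about_measure_eq[OF sym, of "{t..}"]
      by (simp add: cdf_of_def algebra_simps)
    moreover have "convex_on {0<..} (\<lambda>t. cdf_of M X (g + (-1) * t))"
      by (rule convex_on_compose_affine[OF cvx]) (use True in auto)
    ultimately show ?thesis by simp
  next
    case False
    \<comment> \<open>Here only the strict tail P(X - g > t) is convex in t; being continuous,
      it coincides with the tail on (0, \<infinity>).\<close>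
    define S where "S t = 1 - cdf_of M X (g + t)" for t
    have S_eq: "S t = measure M {\<omega> \<in> space M. t < X \<omega> - g}" for t
    proof -
      have "measure M {\<omega> \<in> space M. t < X \<omega> - g} = measure M (space M - {\<omega> \<in> space M. X \<omega> \<le> g + t})"
        by (rule arg_cong[where f = "measure M"]) auto
      then show ?thesis
        by (simp add: S_def cdf_of_def prob_compl)
    qed
    have "concave_on {0<..} (\<lambda>t. cdf_of M X (g + 1 * t))"
      by (rule concave_on_compose_affine[OF ccv]) (use False in auto)
    then have S_convex: "convex_on {0<..} S"
      unfolding S_def by (intro convex_on_diff convex_on_const[THEN iffD2]) auto
    have "?T t = S t" if "0 < t" for t
    proof (rule antisym)
      have "isCont S t"
        using convex_on_continuous[OF _ S_convex] that
        by (simp add: continuous_on_eq_continuous_at)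
      then have "(S \<longlongrightarrow> S t) (at_left t)"
        by (simp add: isCont_def filterlim_at_split)
      moreover have "\<forall>\<^sub>F s in at_left t. ?T t \<le> S s"
        using eventually_at_left_real[OF that] unfolding S_eq
        by eventually_elim (auto intro!: finite_measure_mono)
      ultimately show "?T t \<le> S t"
        by (intro tendsto_lowerbound[of S _ "at_left t"]) auto
      show "S t \<le> ?T t"
        unfolding S_eq by (intro finite_measure_mono) auto
    qed
    then show ?thesis
      by (intro convex_on_cong[OF S_convex]) auto
  qed
qed

lemma nn_integral_lborel_two_mult_Icc:
  "(\<integral>\<^sup>+t. ennreal (if 0 \<le> t \<and> t \<le> s then 2 * t else 0) \<partial>lborel) = ennreal ((max s 0)\<^sup>2)"
proof (cases "0 \<le> s")
  case True
  have deriv: "((\<lambda>t. t\<^sup>2) has_real_derivative 2 * x) (at x)" for x :: real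
    by (auto intro!: derivative_eq_intros)
  have "(\<integral>\<^sup>+t. ennreal (if 0 \<le> t \<and> t \<le> s then 2 * t else 0) \<partial>lborel)
      = (\<integral>\<^sup>+t. ennreal (indicator {0..s} t * (2 * t)) \<partial>lborel)"
    by (intro nn_integral_cong) (auto simp: indicator_def)
  also have "\<dots> = ennreal (s\<^sup>2 - 0\<^sup>2)"
    by (rule nn_integral_has_integral_lebesgue[OF _ has_integral_of_real_deriv[OF True deriv]])
      auto
  finally show ?thesis
    using True by simp
qed (auto intro: nn_integral_zero')

lemma nn_integral_pos_part_power2_layer_cake:
  assumes "sigma_finite_measure M" and [measurable]: "Y \<in> borel_measurable M"
  shows "(\<integral>\<^sup>+\<omega>. ennreal ((max (Y \<omega>) 0)\<^sup>2) \<partial>M)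
    = (\<integral>\<^sup>+t. ennreal (2 * t) * indicator {0..} t * emeasure M {\<omega> \<in> space M. t \<le> Y \<omega>} \<partial>lborel)"
proof -
  interpret pair_sigma_finite M lborel
    using assms(1) by (simp add: pair_sigma_finite_def lborel.sigma_finite_measure_axioms)
  let ?f = "\<lambda>\<omega> t. ennreal (if 0 \<le> t \<and> t \<le> Y \<omega> then 2 * t else 0)"
  have "(\<integral>\<^sup>+\<omega>. ennreal ((max (Y \<omega>) 0)\<^sup>2) \<partial>M) = (\<integral>\<^sup>+\<omega>. (\<integral>\<^sup>+t. ?f \<omega> t \<partial>lborel) \<partial>M)"
    by (simp add: nn_integral_lborel_two_mult_Icc)
  also have "\<dots> = (\<integral>\<^sup>+t. (\<integral>\<^sup>+\<omega>. ?f \<omega> t \<partial>M) \<partial>lborel)"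
    by (rule Fubini[where f = "\<lambda>(\<omega>, t). ?f \<omega> t", simplified, symmetric]) measurable
  also have "\<dots> = (\<integral>\<^sup>+t. ennreal (2 * t) * indicator {0..} t * emeasure M {\<omega> \<in> space M. t \<le> Y \<omega>} \<partial>lborel)"
  proof (rule nn_integral_cong)
    fix t :: real
    have "(\<integral>\<^sup>+\<omega>. ?f \<omega> t \<partial>M)
        = (\<integral>\<^sup>+\<omega>. (ennreal (2 * t) * indicator {0..} t) * indicator {\<omega> \<in> space M. t \<le> Y \<omega>} \<omega> \<partial>M)"
      by (intro nn_integral_cong) (auto simp: indicator_def)
    also have "\<dots> = ennreal (2 * t) * indicator {0..} t * emeasure M {\<omega> \<in> space M. t \<le> Y \<omega>}"
      by (rule nn_integral_cmult_indicator) measurable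
    finally show "(\<integral>\<^sup>+\<omega>. ?f \<omega> t \<partial>M) = \<dots>" .
  qed
  finally show ?thesis .
qed

lemma has_integral_le_pos_part_second_moment:
  fixes lb :: "real \<Rightarrow> real"
  assumes "finite_measure M" and [measurable]: "Y \<in> borel_measurable M" and "0 \<le> a"
    and int: "((\<lambda>t. 2 * t * lb t) has_integral V) {a..b}"
    and lb: "\<And>t. t \<in> {a..b} \<Longrightarrow> 0 \<le> lb t \<and> lb t \<le> measure M {\<omega> \<in> space M. t \<le> Y \<omega>}"
  shows "ennreal V \<le> (\<integral>\<^sup>+\<omega>. ennreal ((max (Y \<omega>) 0)\<^sup>2) \<partial>M)"
proof -
  interpret finite_measure M by fact
  have "ennreal V = (\<integral>\<^sup>+t. ennreal (indicator {a..b} t * (2 * t * lb t)) \<partial>lborel)"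
    by (rule nn_integral_has_integral_lebesgue[symmetric, OF _ int]) (use lb \<open>0 \<le> a\<close> in auto)
  also have "\<dots> \<le> (\<integral>\<^sup>+t. ennreal (2 * t) * indicator {0..} t * emeasure M {\<omega> \<in> space M. t \<le> Y \<omega>} \<partial>lborel)"
  proof (intro nn_integral_mono)
    fix t
    show "ennreal (indicator {a..b} t * (2 * t * lb t))
      \<le> ennreal (2 * t) * indicator {0..} t * emeasure M {\<omega> \<in> space M. t \<le> Y \<omega>}"
    proof (cases "t \<in> {a..b}")
      case True
      then have "ennreal (2 * t * lb t) \<le> ennreal (2 * t) * ennreal (measure M {\<omega> \<in> space M. t \<le> Y \<omega>})"
        using lb[OF True] \<open>0 \<le> a\<close> by (simp add: ennreal_mult'[symmetric] mult_left_mono)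
      then show ?thesis
        using True \<open>0 \<le> a\<close> by (simp add: emeasure_eq_measure)
    qed simp
  qed
  also have "\<dots> = (\<integral>\<^sup>+\<omega>. ennreal ((max (Y \<omega>) 0)\<^sup>2) \<partial>M)"
    by (rule nn_integral_pos_part_power2_layer_cake[symmetric]) (simp_all add: sigma_finite_measure_axioms)
  finally show ?thesis .
qed

lemma has_integral_trapezoid_moment:
  fixes k v :: real
  assumes "0 < k" "0 < v" "v \<le> 1"
  shows "((\<lambda>t. 2 * t * ((1 - v * max k t / k) / 2)) has_integral k\<^sup>2 * (1 / v\<^sup>2 - v) / 6) {0..k / v}"
proof -
  let ?F1 = "\<lambda>t. (1 - v) * t\<^sup>2 / 2" and ?F2 = "\<lambda>t. t\<^sup>2 / 2 - v * t ^ 3 / (3 * k)"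
  have "k \<le> k / v"
    using assms by (simp add: field_simps)
  have "((\<lambda>t. (1 - v) * t) has_integral (?F1 k - ?F1 0)) {0..k}"
    by (rule has_integral_of_real_deriv) (use \<open>0 < k\<close> in \<open>auto intro!: derivative_eq_intros\<close>)
  then have left: "((\<lambda>t. 2 * t * ((1 - v * max k t / k) / 2)) has_integral (?F1 k - ?F1 0)) {0..k}"
    by (rule has_integral_eq[rotated]) (use \<open>0 < k\<close> in \<open>auto simp: max_def\<close>)
  have "((\<lambda>t. t - v * t\<^sup>2 / k) has_integral (?F2 (k / v) - ?F2 k)) {k..k / v}"
    by (rule has_integral_of_real_deriv[OF \<open>k \<le> k / v\<close>])
      (use \<open>0 < k\<close> in \<open>auto intro!: derivative_eq_intros simp: power2_eq_square\<close>)
  then have right: "((\<lambda>t. 2 * t * ((1 - v * max k t / k) / 2)) has_integral (?F2 (k / v) - ?F2 k)) {k..k / v}"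
    by (rule has_integral_eq[rotated]) (use \<open>0 < k\<close> in \<open>auto simp: max_def field_simps power2_eq_square\<close>)
  have "(?F1 k - ?F1 0) + (?F2 (k / v) - ?F2 k) = k\<^sup>2 * (1 / v\<^sup>2 - v) / 6"
    using assms by (simp add: field_simps power2_eq_square power3_eq_cube)
  with has_integral_combine[OF less_imp_le[OF \<open>0 < k\<close>] \<open>k \<le> k / v\<close> left right]
  show ?thesis by (simp only:)
qed

lemma convex_upper_tail_lt_half:
  assumes P: "prob_space M" and Y: "Y \<in> borel_measurable M"
    and cvx: "convex_on {0<..} (\<lambda>t. measure M {\<omega> \<in> space M. t \<le> Y \<omega>})"
    and half: "\<And>t. 0 < t \<Longrightarrow> measure M {\<omega> \<in> space M. t \<le> Y \<omega>} \<le> 1 / 2"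
    and moment: "(\<integral>\<^sup>+\<omega>. ennreal ((max (Y \<omega>) 0)\<^sup>2) \<partial>M) \<noteq> \<infinity>"
    and "0 < k"
  shows "measure M {\<omega> \<in> space M. k \<le> Y \<omega>} < 1 / 2"
proof (rule ccontr)
  interpret prob_space M by (rule P)
  let ?T = "\<lambda>t. measure M {\<omega> \<in> space M. t \<le> Y \<omega>}"
  assume "\<not> ?T k < 1 / 2"
  then have Tk: "?T k = 1 / 2"
    using half[OF \<open>0 < k\<close>] by simp
  \<comment> \<open>Then the tail stays at 1/2 beyond k, so the second moment is infinite.\<close>
  have tail: "1 / 2 \<le> ?T t" if "k \<le> t" for t
    using convex_on_ge_line_through_bound[OF cvx half \<open>0 < k\<close> that] by (simp add: Tk)
  obtain r where r: "(\<integral>\<^sup>+\<omega>. ennreal ((max (Y \<omega>) 0)\<^sup>2) \<partial>M) = ennreal r" "0 \<le> r"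
    using moment by (cases rule: ennreal_cases) auto
  define b where "b = k + r + 1"
  have "((\<lambda>t. 2 * t * (1 / 2)) has_integral (b\<^sup>2 / 2 - k\<^sup>2 / 2)) {k..b}"
    by (rule has_integral_of_real_deriv) (auto intro!: derivative_eq_intros simp: b_def r)
  then have "ennreal (b\<^sup>2 / 2 - k\<^sup>2 / 2) \<le> ennreal r"
    unfolding r(1)[symmetric]
    by (rule has_integral_le_pos_part_second_moment[OF finite_measure_axioms Y
          less_imp_le[OF \<open>0 < k\<close>]])
      (use tail in auto)
  moreover have "r < b\<^sup>2 / 2 - k\<^sup>2 / 2"
    using \<open>0 < k\<close> r(2) unfolding b_def
    by (simp add: power2_eq_square algebra_simps) (smt (verit) mult_nonneg_nonneg)
  ultimately show False
    using r(2) by simp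
qed

lemma convex_upper_tail_second_moment_bound:
  assumes P: "prob_space M" and [measurable]: "Y \<in> borel_measurable M"
    and cvx: "convex_on {0<..} (\<lambda>t. measure M {\<omega> \<in> space M. t \<le> Y \<omega>})"
    and half: "\<And>t. 0 < t \<Longrightarrow> measure M {\<omega> \<in> space M. t \<le> Y \<omega>} \<le> 1 / 2"
    and moment: "(\<integral>\<^sup>+\<omega>. ennreal ((max (Y \<omega>) 0)\<^sup>2) \<partial>M) \<le> ennreal (s / 2)"
    and "0 \<le> s" and k: "0 < k"
  defines "q \<equiv> measure M {\<omega> \<in> space M. k \<le> Y \<omega>}"
  shows "k\<^sup>2 * (1 - (1 - 2 * q) ^ 3) \<le> 3 * s * (1 - 2 * q)\<^sup>2"
proof -
  interpret prob_space M by (rule P)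
  let ?T = "\<lambda>t. measure M {\<omega> \<in> space M. t \<le> Y \<omega>}"
  define v where "v = 1 - 2 * q"
  have "q < 1 / 2"
    unfolding q_def
    by (rule convex_upper_tail_lt_half[OF P _ cvx half _ k]) (use moment in \<open>auto simp: top_unique\<close>)
  then have v: "0 < v" "v \<le> 1"
    by (auto simp: v_def q_def)
  \<comment> \<open>Below k the tail is at least q; beyond k it lies above the line through (0, 1/2) and (k, q).\<close>
  have "ennreal (k\<^sup>2 * (1 / v\<^sup>2 - v) / 6) \<le> (\<integral>\<^sup>+\<omega>. ennreal ((max (Y \<omega>) 0)\<^sup>2) \<partial>M)"
  proof (rule has_integral_le_pos_part_second_moment[OF finite_measure_axioms _ order_refl
        has_integral_trapezoid_moment[OF k v]])
    fix t assume t: "t \<in> {0..k / v}"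
    show "0 \<le> (1 - v * max k t / k) / 2 \<and> (1 - v * max k t / k) / 2 \<le> ?T t"
    proof
      have "k \<le> k / v"
        using k v by (simp add: le_divide_eq)
      then have "v * max k t \<le> v * (k / v)"
        using t v by (intro mult_left_mono) auto
      then show "0 \<le> (1 - v * max k t / k) / 2"
        using k v by (simp add: divide_le_eq)
      show "(1 - v * max k t / k) / 2 \<le> ?T t"
      proof (cases "t \<le> k")
        case True
        then have "?T k \<le> ?T t"
          by (intro finite_measure_mono) auto
        then show ?thesis
          using True k by (simp add: v_def q_def max_def)
      next
        case False
        then show ?thesis
          using convex_on_ge_line_through_bound[OF cvx half k, of t] k
          by (simp add: v_def q_def max_def field_simps)
      qed
    qed
  qed simp
  then have "ennreal (k\<^sup>2 * (1 / v\<^sup>2 - v) / 6) \<le> ennreal (s / 2)"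
    using moment by (rule order_trans)
  then have "k\<^sup>2 * (1 / v\<^sup>2 - v) / 6 \<le> s / 2"
    using \<open>0 \<le> s\<close> by simp
  then have "k\<^sup>2 * (1 / v\<^sup>2 - v) * v\<^sup>2 \<le> 3 * s * v\<^sup>2"
    using v by (intro mult_right_mono) auto
  moreover have "k\<^sup>2 * (1 / v\<^sup>2 - v) * v\<^sup>2 = k\<^sup>2 * (1 - v ^ 3)"
    using v by (simp add: field_simps power2_eq_square power3_eq_cube)
  ultimately have "k\<^sup>2 * (1 - v ^ 3) \<le> 3 * s * v\<^sup>2"
    by linarith
  then show ?thesis
    by (simp only: v_def)
qed

lemma prob_sgn_eq_symmetric_about:
  assumes P: "prob_space M" and [measurable]: "X \<in> borel_measurable M"
    and sym: "symmetric_about M X g" and "g \<noteq> 0"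
  shows "measure M {\<omega> \<in> space M. sgn (X \<omega>) = sgn g}
    = 1 - measure M {\<omega> \<in> space M. \<bar>g\<bar> \<le> X \<omega> - g}"
proof -
  interpret prob_space M by (rule P)
  have "measure M (space M - {\<omega> \<in> space M. sgn (X \<omega>) = sgn g})
      = measure M {\<omega> \<in> space M. \<bar>g\<bar> \<le> X \<omega> - g}"
  proof (cases "0 < g")
    case True
    then have "measure M (space M - {\<omega> \<in> space M. sgn (X \<omega>) = sgn g})
        = measure M {\<omega> \<in> space M. g - X \<omega> \<in> {g..}}"
      by (intro arg_cong[where f = "measure M"]) (auto simp: sgn_if)
    also have "\<dots> = measure M {\<omega> \<in> space M. X \<omega> - g \<in> {g..}}"
      by (rule symmetric_about_measure_eq[OF sym, symmetric]) auto
    finally show ?thesis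
      using True by simp
  next
    case False
    with \<open>g \<noteq> 0\<close> show ?thesis
      by (intro arg_cong[where f = "measure M"]) (auto simp: sgn_if)
  qed
  then show ?thesis
    by (simp add: prob_compl)
qed

lemma quadratic_le_of_cubic_constraint:
  fixes v z :: real
  assumes v: "0 \<le> v" "v \<le> 1" and z: "0 \<le> z" and h: "z\<^sup>2 * (1 - v ^ 3) \<le> v\<^sup>2"
  shows "(1 - v) * (1 + z + z\<^sup>2) \<le> 1"
proof -
  define c where "c = 1 - v ^ 3"
  have c: "0 \<le> c" "c \<le> 1"
    using v by (auto simp: c_def power_le_one)
  have zc: "z\<^sup>2 * c \<le> v\<^sup>2"
    using h by (simp add: c_def)
  have "(z * c)\<^sup>2 \<le> v\<^sup>2 * c"
    using mult_right_mono[OF zc c(1)] by (simp add: power2_eq_square mult_ac)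
  also have "\<dots> \<le> v\<^sup>2 * 1"
    using c by (intro mult_left_mono) auto
  also have "\<dots> \<le> v\<^sup>2 * (1 + v\<^sup>2)\<^sup>2"
    by (intro mult_left_mono one_le_power) auto
  also have "\<dots> = (v * (1 + v\<^sup>2))\<^sup>2"
    by (simp add: power_mult_distrib)
  finally have "z * c \<le> v * (1 + v\<^sup>2)"
    by (rule power2_le_imp_le) (use v in auto)
  \<comment> \<open>Factor c = (1 - v) (1 + v + v^2) and divide by 1 + v + v^2.\<close>
  then have "(1 - v) * (z + z\<^sup>2) * (1 + v + v\<^sup>2) \<le> v * (1 + v + v\<^sup>2)"
    using zc by (simp add: c_def power2_eq_square power3_eq_cube algebra_simps)
  then have "(1 - v) * (z + z\<^sup>2) \<le> v"
    using v by (simp add: mult_le_cancel_right add_pos_nonneg)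
  then show ?thesis
    by (simp add: algebra_simps)
qed

theorem mainTheorem8:
  fixes M :: "'a measure" and X :: "'a \<Rightarrow> real" and g \<sigma> :: real
  assumes "prob_space M"
    and "X \<in> borel_measurable M"
    and "integrable M X" and "integrable M (\<lambda>\<omega>. (X \<omega>)\<^sup>2)"
    and "prob_space.expectation M X = g" and "g \<noteq> 0"
    and "\<sigma> > 0" and "prob_space.variance M X = \<sigma>\<^sup>2"
    and "unimodal M X" and "symmetric_about M X g"
  shows "prob_space.prob M {\<omega> \<in> space M. sgn (X \<omega>) = sgn g}
           \<ge> 1 - 1/2 * (1 / (1 + \<bar>g\<bar> / (sqrt 3 * \<sigma>) + (\<bar>g\<bar> / (sqrt 3 * \<sigma>))\<^sup>2))"
proof -
  interpret prob_space M by fact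
  note X[measurable] = \<open>X \<in> borel_measurable M\<close>
  define q where "q = measure M {\<omega> \<in> space M. \<bar>g\<bar> \<le> X \<omega> - g}"
  have "integrable M (\<lambda>\<omega>. (X \<omega> - g)\<^sup>2)"
    using assms(3,4) by (simp add: power2_diff)
  then have moment: "(\<integral>\<^sup>+\<omega>. ennreal ((max (X \<omega> - g) 0)\<^sup>2) \<partial>M) = ennreal (\<sigma>\<^sup>2 / 2)"
    using symmetric_about_pos_part_second_moment[OF assms(10) X] assms(5,8) by simp
  have "\<bar>g\<bar>\<^sup>2 * (1 - (1 - 2 * q) ^ 3) \<le> 3 * \<sigma>\<^sup>2 * (1 - 2 * q)\<^sup>2"
    unfolding q_def
    by (rule convex_upper_tail_second_moment_bound[OF assms(1) _
          convex_on_upper_tail[OF assms(1) X assms(9,10)]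
          symmetric_about_upper_tail_le_half[OF assms(1,10) X] eq_refl[OF moment]])
      (use assms(6) in auto)
  moreover have "0 \<le> q" "q \<le> 1 / 2"
    using symmetric_about_upper_tail_le_half[OF assms(1,10) X, of "\<bar>g\<bar>"] assms(6) by (auto simp: q_def)
  moreover define z where "z = \<bar>g\<bar> / (sqrt 3 * \<sigma>)"
  ultimately have "(1 - (1 - 2 * q)) * (1 + z + z\<^sup>2) \<le> 1"
    using assms(7)
    by (intro quadratic_le_of_cubic_constraint)
      (auto simp: z_def power_divide power_mult_distrib divide_le_eq mult_ac)
  moreover have "0 < 1 + z + z\<^sup>2"
    using assms(7) by (simp add: z_def add_pos_nonneg)
  ultimately have "q \<le> 1 / 2 * (1 / (1 + z + z\<^sup>2))"
    by (simp add: field_simps)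
  then show ?thesis
    using prob_sgn_eq_symmetric_about[OF assms(1) X assms(10,6)] by (simp add: q_def z_def)
qed

end
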